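(* If $d_1-p_1\le d_2-p_2\le\cdots\le d_n-p_n$, then first-fit satisfies $FF(I)<2\,OPT(I)$ for every such instance $I$ with $OPT(I)\ge2$ (and $FF(I)=1$ when $OPT(I)=1$); in particular first-fit is a 2-approximation on this class. The bound is tight: for every integer $k\ge1$, the instance with $3k+1$ jobs $a_1,\dots,a_k$ with $(p,d)=(k,2k)$, $b_1,\dots,b_k$ with $(p,d)=(1,k+1)$, $c_1,\dots,c_{k+1}$ with $(p,d)=(k+1,2k+1)$, in the fixed order $a_1,b_1,\dots,a_k,b_k,c_1,\dots,c_{k+1}$ (all slacks equal $k$), has $OPT(I)=k+1$ and $FF(I)=2k+1$.
   Context: Fixed order scheduling with deadlines: there are jobs $J=\{1,\dots,n\}$, each job $j$ having a processing time $p_j\in\mathbb{N}$, $p_j>0$, and a deadline $d_j\in\mathbb{N}$ with $d_j\ge p_j$; the slack of job $j$ is $d_j-p_j$. All jobs are released at time $0$; job $j$ precedes job $k$ in the fixed order iff $j<k$. A schedule $\tau:J\to\{1,\dots,n\}$ assigns jobs to identical machines; each machine processes its jobs in the fixed order from time $0$ without idle time or preemption, so job $j$ completes at $\sum_{k\le j,\tau(k)=\tau(j)}p_k$; it is feasible if every job completes by its deadline. $OPT(I)$ is the minimum number of machines used by a feasible schedule. First-fit (FF): machines indexed $1,2,\dots$; process jobs in the fixed order and assign each job $j$ to the smallest-index machine whose current load (sum of processing times already assigned) plus $p_j$ is at most $d_j$; $FF(I)$ is the number of nonempty machines. *)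

theory Defs
  imports Main
begin

text \<open>An instance is a list of jobs (p, d) in the fixed order; job j is I ! j (0-based).\<close>
type_synonym fo_instance = "(nat \<times> nat) list"

definition valid_instance :: "fo_instance \<Rightarrow> bool" where
  "valid_instance I \<longleftrightarrow> (\<forall>(p, d) \<in> set I. 0 < p \<and> p \<le> d)"

definition slack :: "nat \<times> nat \<Rightarrow> nat" where
  "slack job = snd job - fst job"

definition completion :: "fo_instance \<Rightarrow> (nat \<Rightarrow> nat) \<Rightarrow> nat \<Rightarrow> nat" where
  "completion I tau j = (\<Sum>k\<in>{k. k \<le> j \<and> tau k = tau j}. fst (I ! k))"

text \<open>tau assigns jobs 0..n-1 to machines 0..n-1 (values outside the job range are irrelevant).\<close>
definition feasible :: "fo_instance \<Rightarrow> (nat \<Rightarrow> nat) \<Rightarrow> bool" where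
  "feasible I tau \<longleftrightarrow> (\<forall>j < length I. tau j < length I \<and> completion I tau j \<le> snd (I ! j))"

definition machines_used :: "fo_instance \<Rightarrow> (nat \<Rightarrow> nat) \<Rightarrow> nat" where
  "machines_used I tau = card (tau ` {..<length I})"

definition OPT :: "fo_instance \<Rightarrow> nat" where
  "OPT I = Min {machines_used I tau | tau. feasible I tau}"

text \<open>First-fit: L i is the current load of machine i; returns the machine index of each job.\<close>
fun ff_run :: "fo_instance \<Rightarrow> (nat \<Rightarrow> nat) \<Rightarrow> nat list" where
  "ff_run [] L = []"
| "ff_run ((p, d) # js) L =
     (let i = (LEAST i. L i + p \<le> d) in i # ff_run js (L(i := L i + p)))"

definition FF :: "fo_instance \<Rightarrow> nat" where
  "FF I = card (set (ff_run I (\<lambda>_. 0)))"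

definition tight_inst :: "nat \<Rightarrow> fo_instance" where
  "tight_inst k = concat (map (\<lambda>_. [(k, 2*k), (1, k+1)]) [0..<k]) @ replicate (k+1) (k+1, 2*k+1)"

end

theory Submission
  imports Defs
begin

text \<open>
  Let job \<open>j\<close> be placed by first-fit on its highest machine \<open>c\<close>, and let \<open>s\<close> be its slack.
  First-fit skipped machines \<open>0..c-1\<close>, so each already carries more than \<open>s\<close> units of work.
  Call an earlier job long if its processing time exceeds \<open>s\<close>. Since slacks are sorted, a
  feasible schedule can run two jobs up to \<open>j\<close> on a common machine only if the earlier one is
  short; hence the long jobs and \<open>j\<close> occupy distinct machines in every feasible schedule, and a
  machine of an optimal schedule carries at most \<open>2s\<close> work up to \<open>j\<close> plus the excess of its long
  job. Comparing the work done up to \<open>j\<close> in both schedules yields \<open>c + 2 \<le> 2 OPT\<close>.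
\<close>

section \<open>Schedules and completion times\<close>

lemma valid_instance_nth_deadline:
  assumes "valid_instance I" and "j < length I"
  shows "snd (I ! j) = slack (I ! j) + fst (I ! j)"
  using assms unfolding valid_instance_def slack_def by (cases "I ! j") (auto dest!: nth_mem)

lemma slack_mono:
  assumes "sorted (map slack I)" and "k \<le> j" and "j < length I"
  shows "slack (I ! k) \<le> slack (I ! j)"
  using sorted_nth_mono[OF assms(1), of k j] assms(2,3) by simp

definition load_before :: "fo_instance \<Rightarrow> (nat \<Rightarrow> nat) \<Rightarrow> nat \<Rightarrow> nat \<Rightarrow> nat" where
  "load_before I tau j i = (\<Sum>k<j. if tau k = i then fst (I ! k) else 0)"

lemma load_before_eq_sum:
  "load_before I tau j i = (\<Sum>k\<in>{k. k < j \<and> tau k = i}. fst (I ! k))"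
proof -
  have "load_before I tau j i = (\<Sum>k\<in>{k \<in> {..<j}. tau k = i}. fst (I ! k))"
    unfolding load_before_def by (rule sum.inter_filter[symmetric]) simp
  also have "{k \<in> {..<j}. tau k = i} = {k. k < j \<and> tau k = i}" by auto
  finally show ?thesis .
qed

lemma completion_eq_load_before:
  "completion I tau j = load_before I tau j (tau j) + fst (I ! j)"
proof -
  have "{k. k \<le> j \<and> tau k = tau j} = insert j {k. k < j \<and> tau k = tau j}" by auto
  then show ?thesis unfolding completion_def load_before_eq_sum by simp
qed

lemma completion_le_sum:
  assumes "{k. k \<le> j \<and> tau k = tau j} \<subseteq> A" and "finite A"
  shows "completion I tau j \<le> (\<Sum>k\<in>A. fst (I ! k))"
  unfolding completion_def by (rule sum_mono2[OF assms(2,1)]) simp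

lemma sum_load_before_le:
  assumes "finite M"
  shows "(\<Sum>i\<in>M. load_before I tau j i) \<le> (\<Sum>k<j. fst (I ! k))"
proof -
  have "(\<Sum>i\<in>M. load_before I tau j i) = (\<Sum>k<j. if tau k \<in> M then fst (I ! k) else 0)"
    unfolding load_before_def using assms by (subst sum.swap) simp
  also have "\<dots> \<le> (\<Sum>k<j. fst (I ! k))" by (rule sum_mono) simp
  finally show ?thesis .
qed

lemma earlier_job_le_slack:
  assumes "sorted (map slack I)" and "j < length I" and "k < k'" and "k' \<le> j"
    and "tau k = tau k'" and "completion I tau k' \<le> snd (I ! k')"
  shows "fst (I ! k) \<le> slack (I ! j)"
proof -
  have "fst (I ! k) + fst (I ! k') = (\<Sum>x\<in>{k, k'}. fst (I ! x))" using assms(3) by simp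
  also have "\<dots> \<le> completion I tau k'"
    unfolding completion_def by (rule sum_mono2) (use assms(3,5) in auto)
  finally have "fst (I ! k) \<le> slack (I ! k')" using assms(6) by (simp add: slack_def)
  also have "\<dots> \<le> slack (I ! j)" using slack_mono[OF assms(1,4,2)] .
  finally show ?thesis .
qed

lemma inj_on_long_jobs:
  assumes srt: "sorted (map slack I)" and j: "j < length I"
    and due: "\<And>k. k \<le> j \<Longrightarrow> completion I tau k \<le> snd (I ! k)"
    and A: "A \<subseteq> {..j}" and long: "\<And>k. k \<in> A \<Longrightarrow> k < j \<Longrightarrow> slack (I ! j) < fst (I ! k)"
  shows "inj_on tau A"
proof -
  have False if "x \<in> A" "y \<in> A" "x < y" "tau x = tau y" for x y
    using earlier_job_le_slack[OF srt j \<open>x < y\<close> _ \<open>tau x = tau y\<close> due] long[of x] A that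
    by fastforce
  then show ?thesis by (metis inj_onI linorder_neqE_nat)
qed

lemma card_image_le_machines_used:
  "A \<subseteq> {..<length I} \<Longrightarrow> card (tau ` A) \<le> machines_used I tau"
  unfolding machines_used_def by (intro card_mono) auto

lemma feasible_id: "valid_instance I \<Longrightarrow> feasible I id"
  unfolding feasible_def completion_eq_load_before
  by (auto simp: load_before_def valid_instance_nth_deadline)

lemma finite_machines_used: "finite {machines_used I tau | tau. feasible I tau}"
proof (rule finite_subset)
  show "{machines_used I tau | tau. feasible I tau} \<subseteq> {..length I}"
    using card_image_le[of "{..<length I}"] by (auto simp: machines_used_def)
qed simp

lemma OPT_attained:
  assumes "valid_instance I"
  obtains tau where "feasible I tau" and "OPT I = machines_used I tau"
  using Min_in[OF finite_machines_used, of I] feasible_id[OF assms] unfolding OPT_def by blast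

lemma OPT_le: "feasible I tau \<Longrightarrow> OPT I \<le> machines_used I tau"
  unfolding OPT_def by (rule Min_le[OF finite_machines_used]) blast

section \<open>First-fit\<close>

lemma length_ff_run: "length (ff_run I L) = length I"
  by (induction I arbitrary: L) (auto simp: Let_def)

lemma nth_ff_run:
  "j < length I \<Longrightarrow> ff_run I L ! j =
     (LEAST i. L i + load_before I (nth (ff_run I L)) j i + fst (I ! j) \<le> snd (I ! j))"
proof (induction I arbitrary: L j)
  case Nil
  then show ?case by simp
next
  case (Cons a js)
  obtain p d where a: "a = (p, d)" by (cases a)
  define i0 where "i0 = (LEAST i. L i + p \<le> d)"
  define L' where "L' = L(i0 := L i0 + p)"
  have f: "ff_run (a # js) L = i0 # ff_run js L'"
    by (simp add: a i0_def L'_def Let_def)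
  show ?case
  proof (cases j)
    case 0
    then show ?thesis unfolding f by (simp add: a i0_def load_before_def)
  next
    case (Suc j')
    with Cons.prems have j': "j' < length js" by simp
    have shift: "L' i + load_before js (nth (ff_run js L')) j' i
       = L i + load_before (a # js) (nth (ff_run (a # js) L)) j i" for i
      unfolding load_before_def f Suc sum.lessThan_Suc_shift nth_Cons_Suc nth_Cons_0
      by (simp add: L'_def a)
    show ?thesis
      using Cons.IH[OF j', of L'] by (simp add: f Suc shift)
  qed
qed

abbreviation ff_machine :: "fo_instance \<Rightarrow> nat \<Rightarrow> nat" where
  "ff_machine I \<equiv> nth (ff_run I (\<lambda>_. 0))"

lemma ff_machine_eq_Least:
  "j < length I \<Longrightarrow> ff_machine I j =
     (LEAST i. load_before I (ff_machine I) j i + fst (I ! j) \<le> snd (I ! j))"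
  using nth_ff_run[of j I "\<lambda>_. 0"] by simp

lemma ff_machine_meets_deadline:
  assumes v: "valid_instance I" and j: "j < length I"
  shows "completion I (ff_machine I) j \<le> snd (I ! j)"
proof -
  obtain fresh where fresh: "fresh \<notin> ff_machine I ` {..<j}"
    using ex_new_if_finite[OF infinite_UNIV_nat, of "ff_machine I ` {..<j}"] by auto
  have "load_before I (ff_machine I) j fresh = 0"
    unfolding load_before_def using fresh by (intro sum.neutral) auto
  then have "load_before I (ff_machine I) j fresh + fst (I ! j) \<le> snd (I ! j)"
    using valid_instance_nth_deadline[OF v j] by simp
  then show ?thesis
    unfolding completion_eq_load_before ff_machine_eq_Least[OF j] by (rule LeastI)
qed

lemma ff_machine_skips_full:
  assumes "j < length I" and "i < ff_machine I j"
  shows "snd (I ! j) < load_before I (ff_machine I) j i + fst (I ! j)"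
  using not_less_Least[OF assms(2)[unfolded ff_machine_eq_Least[OF assms(1)]]] by simp

lemma FF_le_Suc_max_machine:
  assumes "\<And>k. k < length I \<Longrightarrow> ff_machine I k \<le> c"
  shows "FF I \<le> Suc c"
proof -
  have "set (ff_run I (\<lambda>_. 0)) \<subseteq> {..c}"
    using assms by (auto simp: in_set_conv_nth length_ff_run)
  then show ?thesis unfolding FF_def using card_mono[of "{..c}"] by fastforce
qed

lemma FF_pos: "I \<noteq> [] \<Longrightarrow> 0 < FF I"
  unfolding FF_def using length_ff_run[of I "\<lambda>_. 0"] by (auto simp: card_gt_0_iff)

section \<open>The approximation bound\<close>

lemma ff_work_lower_bound:
  assumes v: "valid_instance I" and srt: "sorted (map slack I)" and j: "j < length I"
    and top: "\<And>k. k < j \<Longrightarrow> ff_machine I k \<le> ff_machine I j"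
  defines "s \<equiv> slack (I ! j)" and "B \<equiv> {k. k < j \<and> slack (I ! j) < fst (I ! k)}"
  shows "ff_machine I j * (s + 1) + (\<Sum>k\<in>B. fst (I ! k) - s - 1) \<le> (\<Sum>k<j. fst (I ! k))"
proof -
  let ?f = "ff_machine I"
  define c where "c = ?f j"
  define X where "X i = {k \<in> B. ?f k = i}" for i
  have finB: "finite B" by (simp add: B_def)
  have below: "?f k < c" if "k \<in> B" for k
  proof -
    have "inj_on ?f (insert j B)"
      by (rule inj_on_long_jobs[OF srt j])
        (use ff_machine_meets_deadline[OF v] j in \<open>auto simp: B_def s_def\<close>)
    then have "?f k \<noteq> ?f j" using that by (auto simp: B_def image_iff)
    then show ?thesis using top[of k] that by (auto simp: B_def c_def)
  qed
  have machine: "s + 1 + (\<Sum>k\<in>X i. fst (I ! k) - s - 1) \<le> load_before I ?f j i"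
    if "i < c" for i
  proof (cases "X i = {}")
    case True
    then show ?thesis
      using ff_machine_skips_full[OF j, of i] that valid_instance_nth_deadline[OF v j]
      by (simp add: c_def s_def)
  next
    case False
    have "finite (X i)" by (simp add: X_def B_def)
    then have "1 \<le> card (X i)" using False by (simp add: Suc_le_eq card_gt_0_iff)
    then have "1 * (s + 1) \<le> (\<Sum>k\<in>X i. s + 1)" unfolding sum_constant of_nat_id by (rule mult_le_mono1)
    then have "s + 1 + (\<Sum>k\<in>X i. fst (I ! k) - s - 1)
        \<le> (\<Sum>k\<in>X i. s + 1) + (\<Sum>k\<in>X i. fst (I ! k) - s - 1)"
      by simp
    also have "\<dots> = (\<Sum>k\<in>X i. fst (I ! k))"
      unfolding sum.distrib[symmetric] by (rule sum.cong) (auto simp: X_def B_def s_def)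
    also have "\<dots> \<le> load_before I ?f j i"
      unfolding load_before_eq_sum by (rule sum_mono2) (auto simp: X_def B_def)
    finally show ?thesis .
  qed
  have "(\<Sum>k\<in>B. fst (I ! k) - s - 1) = (\<Sum>i<c. \<Sum>k\<in>X i. fst (I ! k) - s - 1)"
  proof -
    have "?f ` B \<subseteq> {..<c}" using below by auto
    from sum.group[OF finB _ this, of "\<lambda>k. fst (I ! k) - s - 1"] show ?thesis
      unfolding X_def by simp
  qed
  then have "c * (s + 1) + (\<Sum>k\<in>B. fst (I ! k) - s - 1)
      = (\<Sum>i<c. s + 1 + (\<Sum>k\<in>X i. fst (I ! k) - s - 1))"
    by (simp only: sum.distrib sum_constant card_lessThan of_nat_id) (simp add: distrib_left)
  also have "\<dots> \<le> (\<Sum>i<c. load_before I ?f j i)" by (rule sum_mono) (rule machine, simp)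
  also have "\<dots> \<le> (\<Sum>k<j. fst (I ! k))" by (rule sum_load_before_le) simp
  finally show ?thesis by (simp add: c_def)
qed

lemma load_upto_eq_completion_last:
  assumes "r \<in> tau ` {..j}"
  obtains l where "l \<le> j" and "tau l = r"
    and "(\<Sum>k\<in>{k. k \<le> j \<and> tau k = r}. fst (I ! k)) = completion I tau l"
    and "\<And>k. k \<le> j \<Longrightarrow> tau k = r \<Longrightarrow> k \<le> l"
proof -
  define Q where "Q = {k. k \<le> j \<and> tau k = r}"
  have finQ: "finite Q" and neQ: "Q \<noteq> {}" using assms by (auto simp: Q_def)
  have lQ: "Max Q \<in> Q" and ge: "\<And>k. k \<in> Q \<Longrightarrow> k \<le> Max Q"
    using Max_in[OF finQ neQ] Max_ge[OF finQ] by auto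
  have "{k. k \<le> Max Q \<and> tau k = tau (Max Q)} = Q"
    using lQ ge by (auto simp: Q_def)
  then show thesis
    using that[of "Max Q"] lQ ge unfolding completion_def by (auto simp: Q_def)
qed

lemma opt_work_upper_bound:
  assumes v: "valid_instance I" and srt: "sorted (map slack I)" and j: "j < length I"
    and due: "\<And>k. k \<le> j \<Longrightarrow> completion I tau k \<le> snd (I ! k)"
  defines "s \<equiv> slack (I ! j)" and "B \<equiv> {k. k < j \<and> slack (I ! j) < fst (I ! k)}"
  shows "(\<Sum>k\<le>j. fst (I ! k)) + s \<le> fst (I ! j) + 2 * s * card (tau ` {..j}) + (\<Sum>k\<in>B. fst (I ! k) - s)"
proof -
  define R where "R = tau ` {..j}"
  define W where "W r = (\<Sum>k\<in>{k. k \<le> j \<and> tau k = r}. fst (I ! k))" for r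
  define Y where "Y r = (\<Sum>k\<in>{k \<in> B. tau k = r}. fst (I ! k) - s)" for r
  have finR: "finite R" and finB: "finite B" and tjR: "tau j \<in> R"
    by (auto simp: R_def B_def)
  have last: "W r \<le> s + fst (I ! l)" if "l \<le> j" "W r = completion I tau l" for r l
  proof -
    have "W r \<le> snd (I ! l)" using due[of l] that by simp
    also have "\<dots> = slack (I ! l) + fst (I ! l)"
      using valid_instance_nth_deadline[OF v] that j by simp
    also have "slack (I ! l) \<le> s" unfolding s_def using slack_mono[OF srt _ j] that by simp
    finally show ?thesis by simp
  qed
  have own: "W (tau j) \<le> s + fst (I ! j)"
  proof -
    obtain l where l: "l \<le> j" "W (tau j) = completion I tau l"
      and after: "\<And>k. k \<le> j \<Longrightarrow> tau k = tau j \<Longrightarrow> k \<le> l"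
      using load_upto_eq_completion_last[of "tau j" tau j I] unfolding W_def by blast
    have "l = j" using l(1) after[of j] by simp
    then show ?thesis using last[OF l] by simp
  qed
  have other: "W r \<le> 2 * s + Y r" if r: "r \<in> R - {tau j}" for r
  proof -
    obtain l where l: "l \<le> j" "tau l = r" "W r = completion I tau l"
      using load_upto_eq_completion_last[of r tau j I] r unfolding W_def R_def by blast
    have "l < j" using l r by (cases "l = j") auto
    show ?thesis
    proof (cases "l \<in> B")
      case True
      have "fst (I ! l) - s \<le> Y r"
        unfolding Y_def by (rule member_le_sum) (use True l finB in auto)
      then show ?thesis using last[OF l(1,3)] by linarith
    next
      case False
      then show ?thesis using last[OF l(1,3)] \<open>l < j\<close> by (simp add: B_def s_def)
    qed
  qed
  have "(\<Sum>k\<le>j. fst (I ! k)) = (\<Sum>r\<in>R. W r)"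
    using sum.group[of "{..j}" R tau "\<lambda>k. fst (I ! k)"] by (simp add: R_def W_def)
  also have "\<dots> = W (tau j) + (\<Sum>r\<in>R - {tau j}. W r)" using sum.remove[OF finR tjR] .
  also have "\<dots> \<le> s + fst (I ! j) + (\<Sum>r\<in>R - {tau j}. 2 * s + Y r)"
    using own sum_mono[of "R - {tau j}" W, OF other] by linarith
  also have "(\<Sum>r\<in>R - {tau j}. 2 * s + Y r) = 2 * s * (card R - 1) + (\<Sum>r\<in>R - {tau j}. Y r)"
    using finR tjR by (simp add: sum.distrib)
  also have "(\<Sum>r\<in>R - {tau j}. Y r) \<le> (\<Sum>r\<in>R. Y r)" by (rule sum_mono2[OF finR]) auto
  also have "(\<Sum>r\<in>R. Y r) = (\<Sum>k\<in>B. fst (I ! k) - s)"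
  proof -
    have "tau ` B \<subseteq> R" by (auto simp: R_def B_def)
    from sum.group[OF finB finR this, of "\<lambda>k. fst (I ! k) - s"] show ?thesis
      unfolding Y_def by simp
  qed
  finally show ?thesis
    using finR tjR by (cases "card R") (auto simp: R_def card_gt_0_iff algebra_simps)
qed

lemma twice_bound_arith:
  fixes c s M b :: nat
  assumes "c * (s + 1) + s \<le> 2 * s * M + b" and "b + 1 \<le> M"
  shows "c + 2 \<le> 2 * M"
proof (rule ccontr)
  assume "\<not> c + 2 \<le> 2 * M"
  then have "(2 * M - 1) * (s + 1) \<le> c * (s + 1)" by (intro mult_le_mono1) linarith
  moreover have "(2 * M - 1) * (s + 1) + s = 2 * s * M + (2 * M - 1)"
    using assms(2) by (cases M) (auto simp: algebra_simps)
  ultimately show False using assms by linarith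
qed

lemma FF_lt_twice_machines_used:
  assumes v: "valid_instance I" and srt: "sorted (map slack I)" and feas: "feasible I tau"
    and ne: "I \<noteq> []"
  shows "FF I < 2 * machines_used I tau"
proof -
  let ?f = "ff_machine I" and ?n = "length I"
  define M where "M = machines_used I tau"
  have "Max (?f ` {..<?n}) \<in> ?f ` {..<?n}" using ne by (intro Max_in) auto
  then obtain j where j: "j < ?n" and fj: "?f j = Max (?f ` {..<?n})" by auto
  have top: "?f k \<le> ?f j" if "k < ?n" for k unfolding fj using that by (intro Max_ge) auto
  define s where "s = slack (I ! j)"
  define B where "B = {k. k < j \<and> s < fst (I ! k)}"
  have due: "completion I tau k \<le> snd (I ! k)" if "k \<le> j" for k
    using feas that j unfolding feasible_def by simp
  have lower: "?f j * (s + 1) + (\<Sum>k\<in>B. fst (I ! k) - s - 1) \<le> (\<Sum>k<j. fst (I ! k))"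
    using ff_work_lower_bound[OF v srt j] top j unfolding s_def B_def by simp
  have upper: "(\<Sum>k\<le>j. fst (I ! k)) + s
      \<le> fst (I ! j) + 2 * s * card (tau ` {..j}) + (\<Sum>k\<in>B. fst (I ! k) - s)"
    using opt_work_upper_bound[OF v srt j due] unfolding s_def B_def by simp
  have "(\<Sum>k\<in>B. fst (I ! k) - s) = (\<Sum>k\<in>B. (fst (I ! k) - s - 1) + 1)"
    by (rule sum.cong) (auto simp: B_def)
  then have excess: "(\<Sum>k\<in>B. fst (I ! k) - s) = (\<Sum>k\<in>B. fst (I ! k) - s - 1) + card B"
    by (simp only: sum.distrib) simp
  have "card (tau ` {..j}) \<le> M"
    unfolding M_def by (rule card_image_le_machines_used) (use j in auto)
  then have "2 * s * card (tau ` {..j}) \<le> 2 * s * M" by simp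
  moreover have "(\<Sum>k\<le>j. fst (I ! k)) = (\<Sum>k<j. fst (I ! k)) + fst (I ! j)"
    using sum.lessThan_Suc[of "\<lambda>k. fst (I ! k)" j] by (simp only: lessThan_Suc_atMost)
  ultimately have "?f j * (s + 1) + s \<le> 2 * s * M + card B"
    using lower upper excess by linarith
  moreover have "card B + 1 \<le> M"
  proof -
    have "inj_on tau (insert j B)"
      by (rule inj_on_long_jobs[OF srt j due]) (auto simp: B_def s_def)
    then have "card B + 1 = card (tau ` insert j B)"
      by (simp add: card_image B_def)
    also have "\<dots> \<le> M"
      unfolding M_def by (rule card_image_le_machines_used) (use j in \<open>auto simp: B_def\<close>)
    finally show ?thesis .
  qed
  ultimately have "?f j + 2 \<le> 2 * M" by (rule twice_bound_arith)
  moreover have "FF I \<le> Suc (?f j)" by (rule FF_le_Suc_max_machine) (rule top)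
  ultimately show ?thesis unfolding M_def by simp
qed

lemma FF_lt_twice_OPT:
  assumes "valid_instance I" and "sorted (map slack I)" and "1 \<le> OPT I"
  shows "FF I < 2 * OPT I"
proof -
  obtain tau where tau: "feasible I tau" "OPT I = machines_used I tau"
    using OPT_attained[OF assms(1)] .
  have "I \<noteq> []" using assms(3) tau(2) by (auto simp: machines_used_def)
  then show ?thesis using FF_lt_twice_machines_used[OF assms(1,2) tau(1)] tau(2) by simp
qed

lemma FF_eq_1_if_OPT_eq_1:
  assumes "valid_instance I" and "sorted (map slack I)" and "OPT I = 1"
  shows "FF I = 1"
proof -
  obtain tau where "OPT I = machines_used I tau"
    using OPT_attained[OF assms(1)] .
  then have "I \<noteq> []" using assms(3) by (auto simp: machines_used_def)
  then show ?thesis using FF_pos FF_lt_twice_OPT[OF assms(1,2)] assms(3) by fastforce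
qed

section \<open>The tight instance\<close>

lemma length_concat_replicate_pair: "length (concat (replicate r [a, b])) = 2 * r"
  by (induction r) auto

lemma nth_concat_replicate_pair:
  "x < 2 * r \<Longrightarrow> concat (replicate r [a, b]) ! x = (if even x then a else b)"
proof (induction r arbitrary: x)
  case 0
  then show ?case by simp
next
  case (Suc r)
  show ?case
  proof (cases x)
    case (Suc x')
    with Suc.prems Suc.IH[of "x' - 1"] show ?thesis by (cases x') auto
  qed simp
qed

lemma tight_inst_eq:
  "tight_inst k = concat (replicate k [(k, 2*k), (1, k+1)]) @ replicate (k+1) (k+1, 2*k+1)"
  by (simp add: tight_inst_def map_replicate_const)

lemma length_tight_inst: "length (tight_inst k) = 3 * k + 1"
  by (simp add: tight_inst_eq length_concat_replicate_pair)

lemma nth_tight_inst: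
  "x < 3 * k + 1 \<Longrightarrow> tight_inst k ! x =
     (if x < 2 * k then (if even x then (k, 2*k) else (1, k+1)) else (k+1, 2*k+1))"
  by (auto simp: tight_inst_eq nth_append length_concat_replicate_pair nth_concat_replicate_pair
      nth_Cons')

lemma set_tight_inst: "set (tight_inst k) \<subseteq> {(k, 2*k), (1, k+1), (k+1, 2*k+1)}"
  by (auto simp: tight_inst_eq)

lemma valid_tight_inst: "1 \<le> k \<Longrightarrow> valid_instance (tight_inst k)"
  using set_tight_inst[of k] unfolding valid_instance_def by auto

lemma sorted_slack_tight_inst: "sorted (map slack (tight_inst k))"
proof -
  have "map slack (tight_inst k) = replicate (length (tight_inst k)) k"
    by (rule replicate_eqI) (use set_tight_inst[of k] in \<open>auto simp: slack_def\<close>)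
  then show ?thesis by (simp del: length_tight_inst)
qed

text \<open>The jobs \<open>c\<^sub>1, \<dots>, c\<^sub>k\<^sub>+\<^sub>1\<close> are longer than the common slack \<open>k\<close>.\<close>

lemma machines_used_tight_inst_ge:
  assumes "feasible (tight_inst k) tau"
  shows "k + 1 \<le> machines_used (tight_inst k) tau"
proof -
  have len: "3 * k < length (tight_inst k)" by (simp add: length_tight_inst)
  have due: "completion (tight_inst k) tau x \<le> snd (tight_inst k ! x)" if "x \<le> 3 * k" for x
    using assms len that unfolding feasible_def by simp
  have long: "slack (tight_inst k ! (3 * k)) < fst (tight_inst k ! x)" if "x \<in> {2*k..3*k}" for x
    using that by (simp add: nth_tight_inst slack_def)
  have "inj_on tau {2*k..3*k}"
    by (rule inj_on_long_jobs[OF sorted_slack_tight_inst len due _ long]) auto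
  then have "k + 1 = card (tau ` {2*k..3*k})" by (simp add: card_image)
  also have "\<dots> \<le> machines_used (tight_inst k) tau"
    by (rule card_image_le_machines_used) (auto simp: length_tight_inst)
  finally show ?thesis .
qed

text \<open>Machine \<open>q < k\<close> runs \<open>a\<^sub>q\<^sub>+\<^sub>1\<close> and \<open>c\<^sub>q\<^sub>+\<^sub>1\<close>; machine \<open>k\<close> runs all \<open>b\<close>-jobs and \<open>c\<^sub>k\<^sub>+\<^sub>1\<close>.\<close>

definition tight_schedule :: "nat \<Rightarrow> nat \<Rightarrow> nat" where
  "tight_schedule k x = (if x < 2 * k then (if even x then x div 2 else k) else x - 2 * k)"

lemma tight_schedule_eq_k_iff:
  assumes "x < 2 * k"
  shows "tight_schedule k x = k \<longleftrightarrow> x \<in> (\<lambda>q. 2 * q + 1) ` {..<k}"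
proof -
  have "tight_schedule k x = k \<longleftrightarrow> odd x" using assms by (auto simp: tight_schedule_def)
  also have "\<dots> \<longleftrightarrow> x \<in> (\<lambda>q. 2 * q + 1) ` {..<k}" using assms by (auto elim!: oddE)
  finally show ?thesis .
qed

lemma sum_tight_b_jobs: "(\<Sum>x\<in>(\<lambda>q. 2 * q + 1) ` {..<k}. fst (tight_inst k ! x)) \<le> k"
proof -
  have "(\<Sum>x\<in>(\<lambda>q. 2 * q + 1) ` {..<k}. fst (tight_inst k ! x))
      \<le> (\<Sum>q<k. fst (tight_inst k ! (2 * q + 1)))"
    using sum_image_le[of "{..<k}" "\<lambda>x. fst (tight_inst k ! x)" "\<lambda>q. 2 * q + 1"]
    by (simp add: o_def)
  also have "\<dots> = (\<Sum>q<k. 1)" by (rule sum.cong) (auto simp: nth_tight_inst)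
  finally show ?thesis by simp
qed

lemma tight_schedule_meets_deadline:
  assumes j: "j < 3 * k + 1"
  shows "completion (tight_inst k) (tight_schedule k) j \<le> snd (tight_inst k ! j)"
proof -
  let ?I = "tight_inst k" and ?tau = "tight_schedule k" and ?O = "(\<lambda>q. 2 * q + 1) ` {..<k}"
  let ?job = "{x. x \<le> j \<and> ?tau x = ?tau j}"
  consider (a) "j < 2 * k" "even j" | (b) "j < 2 * k" "odd j"
    | (c) "2 * k \<le> j" "j < 3 * k" | (d) "j = 3 * k"
    using j by linarith
  then show ?thesis
  proof cases
    case a
    have "?job \<subseteq> {j}" using a by (auto simp: tight_schedule_def elim!: evenE oddE)
    then have "completion ?I ?tau j \<le> (\<Sum>x\<in>{j}. fst (?I ! x))" by (rule completion_le_sum) simp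
    then show ?thesis using a by (simp add: nth_tight_inst)
  next
    case b
    have "?job \<subseteq> ?O" using b tight_schedule_eq_k_iff[of _ k] by (auto simp: tight_schedule_def)
    then have "completion ?I ?tau j \<le> (\<Sum>x\<in>?O. fst (?I ! x))" by (rule completion_le_sum) simp
    then show ?thesis using b sum_tight_b_jobs[of k] by (simp add: nth_tight_inst)
  next
    case c
    define q where "q = j - 2 * k"
    have q: "q < k" "j = 2 * k + q" using c by (auto simp: q_def)
    have "?job \<subseteq> {2 * q, j}"
      using q by (auto simp: tight_schedule_def split: if_splits elim!: evenE oddE)
    then have "completion ?I ?tau j \<le> (\<Sum>x\<in>{2 * q, j}. fst (?I ! x))"
      by (rule completion_le_sum) simp
    then show ?thesis using q by (simp add: nth_tight_inst)
  next
    case d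
    have "?job \<subseteq> insert j ?O"
      using d tight_schedule_eq_k_iff[of _ k] by (auto simp: tight_schedule_def not_less)
    then have "completion ?I ?tau j \<le> (\<Sum>x\<in>insert j ?O. fst (?I ! x))"
      by (rule completion_le_sum) simp
    also have "\<dots> \<le> fst (?I ! j) + (\<Sum>x\<in>?O. fst (?I ! x))" by (simp add: sum.insert_if)
    finally show ?thesis using d sum_tight_b_jobs[of k] by (simp add: nth_tight_inst)
  qed
qed

lemma OPT_tight_inst:
  assumes "1 \<le> k"
  shows "OPT (tight_inst k) = k + 1"
proof (rule antisym)
  have "feasible (tight_inst k) (tight_schedule k)"
    unfolding feasible_def length_tight_inst
    using tight_schedule_meets_deadline by (auto simp: tight_schedule_def)
  moreover have "machines_used (tight_inst k) (tight_schedule k) \<le> k + 1"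
  proof -
    have "tight_schedule k ` {..<length (tight_inst k)} \<subseteq> {..k}"
      by (auto simp: tight_schedule_def length_tight_inst)
    then show ?thesis unfolding machines_used_def using card_mono[of "{..k}"] by fastforce
  qed
  ultimately show "OPT (tight_inst k) \<le> k + 1" using OPT_le order_trans by blast
  obtain tau where "feasible (tight_inst k) tau" "OPT (tight_inst k) = machines_used (tight_inst k) tau"
    using OPT_attained[OF valid_tight_inst[OF assms]] .
  then show "k + 1 \<le> OPT (tight_inst k)" using machines_used_tight_inst_ge by simp
qed

text \<open>Each pair \<open>a\<^sub>i, b\<^sub>i\<close> fills a fresh machine to load \<open>k + 1\<close>, which then has no room left
  for any later job.\<close>

lemma set_ff_run_tight_pairs:
  "set (ff_run (concat (replicate r [(k, 2*k), (1, k+1)]) @ rest) (\<lambda>i. if i < m then k+1 else 0))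
   = {m..<m+r} \<union> set (ff_run rest (\<lambda>i. if i < m + r then k+1 else 0))"
proof (induction r arbitrary: m)
  case 0
  then show ?case by simp
next
  case (Suc r)
  define L where "L = (\<lambda>i::nat. if i < m then k+1 else 0)"
  have a: "(LEAST i. L i + k \<le> 2 * k) = m"
    by (rule Least_equality) (auto simp: L_def not_less[symmetric])
  define L1 where "L1 = L(m := L m + k)"
  have b: "(LEAST i. L1 i + 1 \<le> k + 1) = m"
    by (rule Least_equality) (auto simp: L1_def L_def not_less[symmetric] split: if_splits)
  have L2: "L1(m := L1 m + 1) = (\<lambda>i. if i < Suc m then k+1 else 0)"
    by (auto simp: fun_eq_iff L1_def L_def)
  define xs where "xs = concat (replicate r [(k, 2*k), (1, k+1)]) @ rest"
  have "ff_run ((k, 2*k) # (1, k+1) # xs) L = m # m # ff_run xs (\<lambda>i. if i < Suc m then k+1 else 0)"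
    by (simp only: ff_run.simps Let_def a flip: L1_def) (simp only: b L2)
  then show ?case using Suc.IH[of "Suc m"] by (auto simp: xs_def L_def)
qed

lemma set_ff_run_tight_tail:
  "set (ff_run (replicate t (k+1, 2*k+1)) (\<lambda>i. if i < m then k+1 else 0)) = {m..<m+t}"
proof (induction t arbitrary: m)
  case 0
  then show ?case by simp
next
  case (Suc t)
  define L where "L = (\<lambda>i::nat. if i < m then k+1 else 0)"
  have c: "(LEAST i. L i + (k+1) \<le> 2 * k + 1) = m"
    by (rule Least_equality) (auto simp: L_def not_less[symmetric])
  have L1: "L(m := L m + (k+1)) = (\<lambda>i. if i < Suc m then k+1 else 0)"
    by (auto simp: fun_eq_iff L_def)
  have "ff_run (replicate (Suc t) (k+1, 2*k+1)) L
      = m # ff_run (replicate t (k+1, 2*k+1)) (\<lambda>i. if i < Suc m then k+1 else 0)"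
    by (simp only: replicate_Suc ff_run.simps Let_def c L1)
  then show ?case using Suc.IH[of "Suc m"] unfolding L_def by auto
qed

lemma FF_tight_inst: "FF (tight_inst k) = 2 * k + 1"
proof -
  have "set (ff_run (tight_inst k) (\<lambda>_. 0)) = {0..<k} \<union> {k..<k + (k+1)}"
    using set_ff_run_tight_pairs[where r=k and k=k and m=0 and rest="replicate (k+1) (k+1, 2*k+1)"]
      set_ff_run_tight_tail[where t="k+1" and k=k and m=k]
    unfolding tight_inst_eq by simp
  also have "\<dots> = {0..<2*k+1}" by auto
  finally show ?thesis by (simp add: FF_def)
qed

theorem mainTheorem6:
  shows "(\<forall>I. valid_instance I \<and> sorted (map slack I) \<longrightarrow>
            (2 \<le> OPT I \<longrightarrow> FF I < 2 * OPT I) \<and> (OPT I = 1 \<longrightarrow> FF I = 1)) \<and>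
         (\<forall>k::nat. 1 \<le> k \<longrightarrow> OPT (tight_inst k) = k + 1 \<and> FF (tight_inst k) = 2 * k + 1)"
  using FF_lt_twice_OPT FF_eq_1_if_OPT_eq_1 OPT_tight_inst FF_tight_inst by auto

end
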